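(* Let $s\in\mathbb{N}$, $m\ge s-1$, $n=9m$, $w_1,\dots,w_s\in\mathbb{C}$, $X=X(w_1,\dots,w_s)$, and let $\phi\in\mathbb{C}_m(\mathbb{Z})$ be a reproducing filter for $X$ with $\|\phi\|_2^2\le 2s/(2m+1)$. Let $\mathsf{S}_n(\phi)=\{z\in\mathbb{T}_n:|\phi(z)|\ge1\}$, let $\mathbf{E}_{m,n}(\phi)$ be the optimal value and $\rho^X$ an optimal solution of $$\min_{\rho\in\mathbb{C}_{5m}(\mathbb{Z})}\Big\{\sup_{z\in\mathbb{T}}|\rho(z)|:\ \rho(z)\phi(z)^2=1\ \ \forall z\in\mathsf{S}_n(\phi)\Big\},$$ and let $\varphi^X\in\mathbb{C}(\mathbb{Z})$ be defined by $\varphi^X(z)=\phi(z)^2+\rho^X(z)\big(\phi(z)^2-\phi(z)^4\big)$. Then $$\max\{\|\mathcal{F}_n[\varphi^X]\|_1,\,18s\|\mathcal{F}_n[\varphi^X]\|_\infty\}\le\frac{36s}{\sqrt{2n+1}}\big(\mathbf{E}_{m,n}(\phi)+1\big).$$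
   Context: $\mathbb{C}(\mathbb{Z})$: two-sided complex sequences; $\mathbb{C}_p(\mathbb{Z})$: those with $x_t=0$ for $|t|>p$. Each $u\in\mathbb{C}_p(\mathbb{Z})$ is identified with its $z$-transform (Laurent polynomial) $u(z)=\sum_\tau u_\tau z^{-\tau}$; products of Laurent polynomials correspond to convolutions $(u*v)_t=\sum_\tau u_\tau v_{t-\tau}$. $(\Delta x)_t=x_{t-1}$; $X(w_1,\dots,w_s)=\{x:\mathsf{f}(\Delta)x=0\}$ with $\mathsf{f}(z)=\prod_k(1-w_kz)$; $\phi$ is reproducing if $\phi*x=x$ for all $x\in X$. $\mathbb{T}$ is the unit circle and $\mathbb{T}_n=\{\exp(i2\pi k/(2n+1)):k=-n,\dots,n\}$. DFT $(\mathcal{F}_n[u])_k=(2n+1)^{-1/2}\sum_{|\tau|\le n}\exp(-i2\pi k\tau/(2n+1))u_\tau$, $k=0,\dots,2n$. *)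

theory Defs
  imports "HOL-Analysis.Analysis"
begin

type_synonym seq = "int \<Rightarrow> complex"

definition Cp :: "nat \<Rightarrow> seq set" where
  "Cp p = {x. \<forall>t. \<bar>t\<bar> > int p \<longrightarrow> x t = 0}"

definition ztrans :: "seq \<Rightarrow> complex \<Rightarrow> complex" where
  "ztrans u z = (\<Sum>\<tau> \<in> {\<tau>. u \<tau> \<noteq> 0}. u \<tau> * z powi (- \<tau>))"

definition conv :: "seq \<Rightarrow> seq \<Rightarrow> seq" where
  "conv u v t = (\<Sum>\<tau> \<in> {\<tau>. u \<tau> \<noteq> 0}. u \<tau> * v (t - \<tau>))"

definition Delta :: "seq \<Rightarrow> seq" where
  "Delta x t = x (t - 1)"

definition factor_op :: "complex \<Rightarrow> seq \<Rightarrow> seq" where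
  "factor_op w x t = x t - w * Delta x t"

text \<open>f(Delta) x with f(z) = prod_k (1 - w_k z).\<close>
definition f_Delta :: "complex list \<Rightarrow> seq \<Rightarrow> seq" where
  "f_Delta ws x = foldr factor_op ws x"

definition Xspace :: "complex list \<Rightarrow> seq set" where
  "Xspace ws = {x. f_Delta ws x = (\<lambda>_. 0)}"

definition reproducing :: "seq \<Rightarrow> complex list \<Rightarrow> bool" where
  "reproducing \<phi> ws \<longleftrightarrow> (\<forall>x \<in> Xspace ws. conv \<phi> x = x)"

definition norm2sq :: "seq \<Rightarrow> real" where
  "norm2sq u = (\<Sum>\<tau> \<in> {\<tau>. u \<tau> \<noteq> 0}. (cmod (u \<tau>))\<^sup>2)"

definition Tn :: "nat \<Rightarrow> complex set" where
  "Tn n = {exp (\<i> * of_real (2 * pi * of_int k / (2 * real n + 1))) | k. k \<in> {- int n .. int n}}"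

definition Sn :: "nat \<Rightarrow> seq \<Rightarrow> complex set" where
  "Sn n \<phi> = {z \<in> Tn n. cmod (ztrans \<phi> z) \<ge> 1}"

definition supT :: "seq \<Rightarrow> real" where
  "supT \<rho> = Sup {cmod (ztrans \<rho> z) | z. cmod z = 1}"

definition feasible :: "nat \<Rightarrow> nat \<Rightarrow> seq \<Rightarrow> seq \<Rightarrow> bool" where
  "feasible m n \<phi> \<rho> \<longleftrightarrow> \<rho> \<in> Cp (5 * m) \<and>
     (\<forall>z \<in> Sn n \<phi>. ztrans \<rho> z * (ztrans \<phi> z)\<^sup>2 = 1)"

definition Emn :: "nat \<Rightarrow> nat \<Rightarrow> seq \<Rightarrow> real" where
  "Emn m n \<phi> = Inf {supT \<rho> | \<rho>. feasible m n \<phi> \<rho>}"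

definition optimal_solution :: "nat \<Rightarrow> nat \<Rightarrow> seq \<Rightarrow> seq \<Rightarrow> bool" where
  "optimal_solution m n \<phi> \<rho> \<longleftrightarrow> feasible m n \<phi> \<rho> \<and> supT \<rho> = Emn m n \<phi>"

text \<open>varphi^X(z) = phi(z)^2 + rho(z)(phi(z)^2 - phi(z)^4), via convolutions.\<close>
definition varphiX :: "seq \<Rightarrow> seq \<Rightarrow> seq" where
  "varphiX \<phi> \<rho> = (let p2 = conv \<phi> \<phi>; p4 = conv p2 p2
                    in (\<lambda>t. p2 t + conv \<rho> (\<lambda>t'. p2 t' - p4 t') t))"

definition DFT :: "nat \<Rightarrow> seq \<Rightarrow> nat \<Rightarrow> complex" where
  "DFT n u k = (1 / sqrt (2 * real n + 1)) *
     (\<Sum>\<tau> \<in> {- int n .. int n}. exp (- \<i> * of_real (2 * pi * real k * of_int \<tau> / (2 * real n + 1))) * u \<tau>)"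

definition DFT_norm1 :: "nat \<Rightarrow> seq \<Rightarrow> real" where
  "DFT_norm1 n u = (\<Sum>k \<in> {0..2*n}. cmod (DFT n u k))"

definition DFT_norminf :: "nat \<Rightarrow> seq \<Rightarrow> real" where
  "DFT_norminf n u = Max ((\<lambda>k. cmod (DFT n u k)) ` {0..2*n})"

end

theory Submission
  imports Defs
begin

(* Since varphiX is supported in [-9m, 9m] = [-n, n], its DFT is its z-transform sampled at the
   (2n+1)-th roots of unity, divided by sqrt (2n+1).  At a sample point z with |phi z| >= 1 the
   interpolation condition rho z phi(z)^2 = 1 collapses varphiX z to 1; elsewhere
   |varphiX z| <= |phi z|^2 (1 + 2 |rho z|).  With E = sup_T |rho| = E_{m,n}(phi), every DFT
   coefficient is therefore bounded by (1 + 2E) min 1 |phi z|^2 / sqrt (2n+1).  This gives the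
   sup-norm bound, and summing it with the discrete Parseval identity
   sum_z |phi z|^2 = (2n+1) |phi|_2^2 <= 18 s gives the l1 bound. *)

lemma Cp_iff_support: "u \<in> Cp p \<longleftrightarrow> {\<tau>. u \<tau> \<noteq> 0} \<subseteq> {- int p .. int p}"
proof -
  have "\<bar>t\<bar> \<le> int p \<longleftrightarrow> t \<in> {- int p .. int p}" for t by auto
  then show ?thesis unfolding Cp_def subset_iff by (auto simp flip: not_less)
qed

lemma Cp_mono: "u \<in> Cp p \<Longrightarrow> p \<le> q \<Longrightarrow> u \<in> Cp q"
  unfolding Cp_def by auto

lemma add_in_Cp: "u \<in> Cp p \<Longrightarrow> v \<in> Cp p \<Longrightarrow> (\<lambda>t. u t + v t) \<in> Cp p"
  unfolding Cp_def by auto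

lemma diff_in_Cp: "u \<in> Cp p \<Longrightarrow> v \<in> Cp p \<Longrightarrow> (\<lambda>t. u t - v t) \<in> Cp p"
  unfolding Cp_def by auto

lemma ztrans_eq_sum_superset:
  "finite A \<Longrightarrow> {\<tau>. u \<tau> \<noteq> 0} \<subseteq> A \<Longrightarrow> ztrans u z = (\<Sum>\<tau>\<in>A. u \<tau> * z powi (- \<tau>))"
  unfolding ztrans_def by (rule sum.mono_neutral_left) auto

lemma conv_eq_sum_superset:
  "finite A \<Longrightarrow> {\<tau>. u \<tau> \<noteq> 0} \<subseteq> A \<Longrightarrow> conv u v t = (\<Sum>\<tau>\<in>A. u \<tau> * v (t - \<tau>))"
  unfolding conv_def by (rule sum.mono_neutral_left) auto

lemma norm2sq_eq_sum_superset:
  "finite A \<Longrightarrow> {\<tau>. u \<tau> \<noteq> 0} \<subseteq> A \<Longrightarrow> norm2sq u = (\<Sum>\<tau>\<in>A. (cmod (u \<tau>))\<^sup>2)"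
  unfolding norm2sq_def by (rule sum.mono_neutral_left) auto

lemma ztrans_Cp: "u \<in> Cp p \<Longrightarrow> ztrans u z = (\<Sum>\<tau> = - int p .. int p. u \<tau> * z powi (- \<tau>))"
  by (rule ztrans_eq_sum_superset) (auto simp: Cp_iff_support)

lemma conv_Cp: "u \<in> Cp p \<Longrightarrow> conv u v t = (\<Sum>\<tau> = - int p .. int p. u \<tau> * v (t - \<tau>))"
  by (rule conv_eq_sum_superset) (auto simp: Cp_iff_support)

lemma ztrans_add: "u \<in> Cp p \<Longrightarrow> v \<in> Cp p \<Longrightarrow> ztrans (\<lambda>t. u t + v t) z = ztrans u z + ztrans v z"
  by (simp add: ztrans_Cp[of _ p] add_in_Cp sum.distrib distrib_right)

lemma ztrans_diff: "u \<in> Cp p \<Longrightarrow> v \<in> Cp p \<Longrightarrow> ztrans (\<lambda>t. u t - v t) z = ztrans u z - ztrans v z"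
  by (simp add: ztrans_Cp[of _ p] diff_in_Cp sum_subtractf left_diff_distrib)

lemma ztrans_shift:
  assumes "finite {\<sigma>. v \<sigma> \<noteq> 0}" and "z \<noteq> 0"
  shows "ztrans (\<lambda>t. v (t - \<tau>)) z = z powi (- \<tau>) * ztrans v z"
proof -
  have supp: "{t. v (t - \<tau>) \<noteq> 0} = (\<lambda>\<sigma>. \<sigma> + \<tau>) ` {\<sigma>. v \<sigma> \<noteq> 0}"
    by (auto intro: image_eqI[of _ _ "_ - \<tau>"])
  have "ztrans (\<lambda>t. v (t - \<tau>)) z = (\<Sum>\<sigma> | v \<sigma> \<noteq> 0. v \<sigma> * z powi (- \<tau> + - \<sigma>))"
    unfolding ztrans_def supp by (subst sum.reindex) (auto simp: inj_on_def add.commute)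
  also have "\<dots> = z powi (- \<tau>) * ztrans v z"
    unfolding ztrans_def sum_distrib_left using \<open>z \<noteq> 0\<close>
    by (intro sum.cong refl) (subst power_int_add, simp_all)
  finally show ?thesis .
qed

lemma conv_in_Cp:
  assumes "u \<in> Cp a" "v \<in> Cp b" shows "conv u v \<in> Cp (a + b)"
  unfolding Cp_def
proof (intro CollectI allI impI)
  fix t :: int assume t: "\<bar>t\<bar> > int (a + b)"
  have "u \<tau> * v (t - \<tau>) = 0" if "\<tau> \<in> {- int a .. int a}" for \<tau>
    using that t assms(2) unfolding Cp_def by auto
  then show "conv u v t = 0" by (simp add: conv_Cp[OF assms(1)] sum.neutral)
qed

lemma ztrans_conv:
  assumes u: "u \<in> Cp a" and v: "v \<in> Cp b" and "z \<noteq> 0"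
  shows "ztrans (conv u v) z = ztrans u z * ztrans v z"
proof -
  have v_finite: "finite {\<sigma>. v \<sigma> \<noteq> 0}"
    using v by (auto simp: Cp_iff_support intro: finite_subset)
  have shift: "(\<Sum>t = - int (a + b) .. int (a + b). v (t - \<tau>) * z powi (- t)) = ztrans (\<lambda>t. v (t - \<tau>)) z"
    if "\<tau> \<in> {- int a .. int a}" for \<tau>
    using that v by (intro ztrans_eq_sum_superset[symmetric]) (auto simp: Cp_iff_support subset_iff)
  have "ztrans (conv u v) z
      = (\<Sum>t = - int (a + b) .. int (a + b). \<Sum>\<tau> = - int a .. int a. u \<tau> * (v (t - \<tau>) * z powi (- t)))"
    by (simp add: ztrans_Cp[OF conv_in_Cp[OF u v]] conv_Cp[OF u] sum_distrib_left sum_distrib_right mult_ac)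
  also have "\<dots> = (\<Sum>\<tau> = - int a .. int a. u \<tau> * (\<Sum>t = - int (a + b) .. int (a + b). v (t - \<tau>) * z powi (- t)))"
    by (subst sum.swap) (simp add: sum_distrib_left)
  also have "\<dots> = (\<Sum>\<tau> = - int a .. int a. u \<tau> * ztrans (\<lambda>t. v (t - \<tau>)) z)"
    by (intro sum.cong refl arg_cong[where f = "(*) _"] shift) simp
  also have "\<dots> = ztrans u z * ztrans v z"
    by (simp add: ztrans_shift[OF v_finite \<open>z \<noteq> 0\<close>] ztrans_Cp[OF u] sum_distrib_left sum_distrib_right mult_ac)
  finally show ?thesis .
qed

definition root_unity :: "nat \<Rightarrow> nat \<Rightarrow> complex" where
  "root_unity N k = cis (2 * pi * real k / real N)"

lemma norm_root_unity [simp]: "cmod (root_unity N k) = 1"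
  by (simp add: root_unity_def)

lemma root_unity_nonzero [simp]: "root_unity N k \<noteq> 0"
  using norm_root_unity[of N k] by (auto simp del: norm_root_unity)

lemma root_unity_powi: "root_unity N k powi j = cis (2 * pi * real k * of_int j / real N)"
  by (simp add: root_unity_def cis_power_int mult_ac)

lemma sum_root_unity_powi:
  assumes "\<bar>j\<bar> < int N"
  shows "(\<Sum>k<N. root_unity N k powi j) = (if j = 0 then of_nat N else 0)"
proof (cases "j = 0")
  case False
  define q where "q = cis (2 * pi * of_int j / real N)"
  have powers: "root_unity N k powi j = q ^ k" for k
    by (simp add: root_unity_powi q_def Complex.DeMoivre mult_ac)
  have "q ^ N = 1"
    using assms by (simp add: q_def Complex.DeMoivre)
  moreover have "q \<noteq> 1"
  proof
    assume "q = 1"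
    then have "cos (2 * pi * of_int j / real N) = 1"
      by (simp add: q_def complex_eq_iff)
    then obtain l :: int where "2 * pi * of_int j / real N = of_int l * 2 * pi"
      by (auto simp: cos_one_2pi_int)
    then have "real_of_int j = real_of_int (l * int N)"
      using assms by (simp add: field_simps)
    then have "j = l * int N"
      by (simp only: of_int_eq_iff)
    with False assms show False
      by (auto simp: abs_mult)
  qed
  ultimately show ?thesis
    using False by (simp add: powers geometric_sum)
qed simp

lemma DFT_eq_ztrans:
  assumes "u \<in> Cp n"
  shows "DFT n u k = ztrans u (root_unity (2 * n + 1) k) / sqrt (2 * real n + 1)"
proof -
  have "exp (- \<i> * of_real (2 * pi * real k * of_int \<tau> / (2 * real n + 1)))
      = root_unity (2 * n + 1) k powi (- \<tau>)" for \<tau>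
    by (simp add: root_unity_powi cis_conv_exp add.commute)
  then show ?thesis
    by (simp add: DFT_def ztrans_Cp[OF assms] mult.commute)
qed

lemma root_unity_in_Tn:
  assumes "k \<le> 2 * n"
  shows "root_unity (2 * n + 1) k \<in> Tn n"
proof -
  define j where "j = (if k \<le> n then int k else int k - (2 * int n + 1))"
  have "j \<in> {- int n .. int n}"
    using assms by (auto simp: j_def)
  moreover have "root_unity (2 * n + 1) k = cis (2 * pi * of_int j / (2 * real n + 1))"
  proof (cases "k \<le> n")
    case False
    have "2 * pi * real k / (2 * real n + 1) = 2 * pi * of_int j / (2 * real n + 1) + 2 * pi"
      using False by (simp add: j_def field_simps)
    then show ?thesis
      by (simp add: root_unity_def cis_mult[symmetric] add.commute)
  qed (simp add: root_unity_def j_def add.commute)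
  ultimately show ?thesis
    unfolding Tn_def by (auto simp: cis_conv_exp)
qed

lemma root_unity_powi_mult:
  "root_unity N k powi a * root_unity N k powi b = root_unity N k powi (a + b)"
  by (simp add: power_int_add)

lemma cnj_root_unity_powi: "cnj (root_unity N k powi j) = root_unity N k powi (- j)"
  by (simp add: root_unity_powi cis_cnj)

lemma sum_norm_ztrans_root_unity_squared:
  assumes u: "u \<in> Cp m" and N: "2 * m < N"
  shows "(\<Sum>k<N. (cmod (ztrans u (root_unity N k)))\<^sup>2) = real N * norm2sq u"
proof -
  let ?I = "{- int m .. int m}"
  have coeffs: "ztrans u (root_unity N k) = (\<Sum>\<tau>\<in>?I. u \<tau> * root_unity N k powi (- \<tau>))" for k
    by (rule ztrans_Cp[OF u])
  have orth: "(\<Sum>k<N. root_unity N k powi (\<sigma> - \<tau>)) = (if \<sigma> = \<tau> then of_nat N else 0)"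
    if "\<sigma> \<in> ?I" "\<tau> \<in> ?I" for \<sigma> \<tau>
    using that N sum_root_unity_powi[of "\<sigma> - \<tau>" N] by auto
  have "complex_of_real (\<Sum>k<N. (cmod (ztrans u (root_unity N k)))\<^sup>2)
      = (\<Sum>k<N. ztrans u (root_unity N k) * cnj (ztrans u (root_unity N k)))"
    by (simp only: of_real_sum complex_norm_square)
  also have "\<dots> = (\<Sum>k<N. \<Sum>\<sigma>\<in>?I. \<Sum>\<tau>\<in>?I. u \<tau> * cnj (u \<sigma>) * root_unity N k powi (\<sigma> - \<tau>))"
    unfolding coeffs
    by (simp add: cnj_root_unity_powi sum_distrib_left sum_distrib_right mult_ac root_unity_powi_mult
        del: complex_cnj_power_int)
  also have "\<dots> = (\<Sum>\<sigma>\<in>?I. \<Sum>\<tau>\<in>?I. u \<tau> * cnj (u \<sigma>) * (\<Sum>k<N. root_unity N k powi (\<sigma> - \<tau>)))"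
    by (simp add: sum_distrib_left sum.swap[of _ "{..<N}"])
  also have "\<dots> = (\<Sum>\<sigma>\<in>?I. \<Sum>\<tau>\<in>?I. if \<sigma> = \<tau> then u \<tau> * cnj (u \<sigma>) * of_nat N else 0)"
    by (intro sum.cong refl) (simp add: orth)
  also have "\<dots> = (\<Sum>\<tau>\<in>?I. u \<tau> * cnj (u \<tau>) * of_nat N)"
    by (simp add: sum.delta)
  also have "\<dots> = complex_of_real (real N * norm2sq u)"
    using u by (simp add: norm2sq_eq_sum_superset[of ?I] Cp_iff_support sum_distrib_left mult_ac
        flip: complex_norm_square)
  finally show ?thesis
    by (simp only: of_real_eq_iff)
qed

lemma norm_ztrans_le_supT:
  assumes "u \<in> Cp p" and "cmod z = 1"
  shows "cmod (ztrans u z) \<le> supT u"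
  unfolding supT_def
proof (rule cSup_upper)
  show "cmod (ztrans u z) \<in> {cmod (ztrans u z) |z. cmod z = 1}"
    using assms(2) by auto
  have "cmod (ztrans u w) \<le> (\<Sum>\<tau> = - int p .. int p. cmod (u \<tau>))" if "cmod w = 1" for w
    unfolding ztrans_Cp[OF assms(1)]
    using norm_sum[of "\<lambda>\<tau>. u \<tau> * w powi (- \<tau>)"] that by (simp add: norm_mult norm_power_int)
  then show "bdd_above {cmod (ztrans u z) |z. cmod z = 1}"
    by (intro bdd_aboveI[where M = "\<Sum>\<tau> = - int p .. int p. cmod (u \<tau>)"]) blast
qed

lemma supT_nonneg: "u \<in> Cp p \<Longrightarrow> 0 \<le> supT u"
  using norm_ztrans_le_supT[of u p 1] by (simp add: order_trans[OF norm_ge_zero])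

lemma norm_varphi_value_le:
  fixes F R :: complex
  assumes R: "cmod R \<le> E" and interp: "1 \<le> cmod F \<Longrightarrow> R * F\<^sup>2 = 1"
  shows "cmod (F\<^sup>2 + R * (F\<^sup>2 - F ^ 4)) \<le> (1 + 2 * E) * min 1 ((cmod F)\<^sup>2)"
proof (cases "1 \<le> cmod F")
  case True
  have "F\<^sup>2 + R * (F\<^sup>2 - F ^ 4) = F\<^sup>2 + R * F\<^sup>2 - (R * F\<^sup>2) * F\<^sup>2"
    by (simp add: algebra_simps power2_eq_square power4_eq_xxxx)
  also have "\<dots> = 1"
    using interp[OF True] by simp
  finally show ?thesis
    using True order_trans[OF norm_ge_zero R] by (simp add: one_le_power)
next
  case False
  have F: "(cmod F)\<^sup>2 \<le> 1"
    using False by (simp add: power_le_one)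
  have "cmod (1 + R * (1 - F\<^sup>2)) \<le> 1 + cmod R * (1 + (cmod F)\<^sup>2)"
    using norm_triangle_ineq[of 1 "R * (1 - F\<^sup>2)"] norm_triangle_ineq4[of 1 "F\<^sup>2"]
      mult_left_mono[of "cmod (1 - F\<^sup>2)" "1 + (cmod F)\<^sup>2" "cmod R"]
    by (simp add: norm_mult norm_power)
  also have "\<dots> \<le> 1 + 2 * E"
    using mult_mono[OF R, of "1 + (cmod F)\<^sup>2" 2] F order_trans[OF norm_ge_zero R] by simp
  finally have "(cmod F)\<^sup>2 * cmod (1 + R * (1 - F\<^sup>2)) \<le> (cmod F)\<^sup>2 * (1 + 2 * E)"
    by (simp add: mult_left_mono)
  moreover have "F\<^sup>2 + R * (F\<^sup>2 - F ^ 4) = F\<^sup>2 * (1 + R * (1 - F\<^sup>2))"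
    by (simp add: algebra_simps power2_eq_square power4_eq_xxxx)
  ultimately show ?thesis
    using F by (simp add: norm_mult norm_power mult.commute min_def)
qed

lemma conv_self_in_Cp: "u \<in> Cp a \<Longrightarrow> conv u u \<in> Cp (2 * a)"
  using conv_in_Cp[of u a u a] by (simp add: mult_2)

lemma varphiX_eq:
  "varphiX \<phi> \<rho> = (\<lambda>t. conv \<phi> \<phi> t + conv \<rho> (\<lambda>t. conv \<phi> \<phi> t - conv (conv \<phi> \<phi>) (conv \<phi> \<phi>) t) t)"
  unfolding varphiX_def Let_def ..

lemma varphiX_in_Cp:
  assumes \<phi>: "\<phi> \<in> Cp a" and \<rho>: "\<rho> \<in> Cp b"
  shows "varphiX \<phi> \<rho> \<in> Cp (b + 4 * a)"
proof -
  define p2 where "p2 = conv \<phi> \<phi>"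
  have p2: "p2 \<in> Cp (2 * a)" and p4: "conv p2 p2 \<in> Cp (4 * a)"
    using conv_self_in_Cp[OF \<phi>] conv_self_in_Cp[of p2 "2 * a"] by (simp_all add: p2_def)
  have "conv \<rho> (\<lambda>t. p2 t - conv p2 p2 t) \<in> Cp (b + 4 * a)"
    using p2 p4 by (intro conv_in_Cp[OF \<rho>] diff_in_Cp) (auto intro: Cp_mono)
  with p2 show ?thesis
    unfolding varphiX_eq p2_def[symmetric] by (intro add_in_Cp) (auto intro: Cp_mono)
qed

lemma ztrans_varphiX:
  assumes \<phi>: "\<phi> \<in> Cp a" and \<rho>: "\<rho> \<in> Cp b" and "z \<noteq> 0"
  shows "ztrans (varphiX \<phi> \<rho>) z
    = (ztrans \<phi> z)\<^sup>2 + ztrans \<rho> z * ((ztrans \<phi> z)\<^sup>2 - ztrans \<phi> z ^ 4)"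
proof -
  define p2 where "p2 = conv \<phi> \<phi>"
  define d where "d = (\<lambda>t. p2 t - conv p2 p2 t)"
  have p2: "p2 \<in> Cp (4 * a)" and p4: "conv p2 p2 \<in> Cp (4 * a)"
    using conv_self_in_Cp[OF \<phi>] conv_self_in_Cp[of p2 "2 * a"] by (auto simp: p2_def intro: Cp_mono)
  have d: "d \<in> Cp (4 * a)"
    unfolding d_def by (rule diff_in_Cp[OF p2 p4])
  have ztrans_p2: "ztrans p2 z = (ztrans \<phi> z)\<^sup>2"
    unfolding p2_def using ztrans_conv[OF \<phi> \<phi> \<open>z \<noteq> 0\<close>] by (simp add: power2_eq_square)
  have ztrans_d: "ztrans d z = (ztrans \<phi> z)\<^sup>2 - ztrans \<phi> z ^ 4"
    unfolding d_def ztrans_diff[OF p2 p4] ztrans_conv[OF p2 p2 \<open>z \<noteq> 0\<close>] ztrans_p2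
    by (simp add: power4_eq_xxxx power2_eq_square)
  have "ztrans (\<lambda>t. p2 t + conv \<rho> d t) z = ztrans p2 z + ztrans (conv \<rho> d) z"
    using p2 conv_in_Cp[OF \<rho> d] by (intro ztrans_add) (auto intro: Cp_mono)
  then show ?thesis
    unfolding varphiX_eq p2_def[symmetric] d_def[symmetric]
    by (simp add: ztrans_conv[OF \<rho> d \<open>z \<noteq> 0\<close>] ztrans_p2 ztrans_d)
qed

lemma norm2sq_nonneg: "0 \<le> norm2sq u"
  unfolding norm2sq_def by (simp add: sum_nonneg)

lemma norm_DFT_varphiX_le:
  assumes \<phi>: "\<phi> \<in> Cp m" and feas: "feasible m n \<phi> \<rho>" and "9 * m \<le> n" and "k \<le> 2 * n"
  shows "cmod (DFT n (varphiX \<phi> \<rho>) k)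
    \<le> (1 + 2 * supT \<rho>) / sqrt (2 * real n + 1) * min 1 ((cmod (ztrans \<phi> (root_unity (2 * n + 1) k)))\<^sup>2)"
proof -
  let ?z = "root_unity (2 * n + 1) k"
  have \<rho>: "\<rho> \<in> Cp (5 * m)"
    using feas by (simp add: feasible_def)
  have "varphiX \<phi> \<rho> \<in> Cp n"
    using varphiX_in_Cp[OF \<phi> \<rho>] \<open>9 * m \<le> n\<close> by (auto intro: Cp_mono)
  then have "DFT n (varphiX \<phi> \<rho>) k
      = ((ztrans \<phi> ?z)\<^sup>2 + ztrans \<rho> ?z * ((ztrans \<phi> ?z)\<^sup>2 - ztrans \<phi> ?z ^ 4)) / sqrt (2 * real n + 1)"
    by (simp add: DFT_eq_ztrans ztrans_varphiX[OF \<phi> \<rho>])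
  moreover have "cmod ((ztrans \<phi> ?z)\<^sup>2 + ztrans \<rho> ?z * ((ztrans \<phi> ?z)\<^sup>2 - ztrans \<phi> ?z ^ 4))
      \<le> (1 + 2 * supT \<rho>) * min 1 ((cmod (ztrans \<phi> ?z))\<^sup>2)"
  proof (rule norm_varphi_value_le)
    show "cmod (ztrans \<rho> ?z) \<le> supT \<rho>"
      by (rule norm_ztrans_le_supT[OF \<rho>]) simp
    show "ztrans \<rho> ?z * (ztrans \<phi> ?z)\<^sup>2 = 1" if "1 \<le> cmod (ztrans \<phi> ?z)"
      using feas that root_unity_in_Tn[OF \<open>k \<le> 2 * n\<close>] by (simp add: feasible_def Sn_def)
  qed
  ultimately show ?thesis
    by (simp add: norm_divide divide_right_mono)
qed

lemma DFT_norms_le: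
  assumes coeff: "\<And>k. k \<le> 2 * n \<Longrightarrow> cmod (DFT n u k) \<le> c * min 1 (\<Phi> k)" and "0 \<le> c"
  shows "DFT_norm1 n u \<le> c * (\<Sum>k = 0..2 * n. \<Phi> k)" and "DFT_norminf n u \<le> c"
proof -
  have "DFT_norm1 n u \<le> (\<Sum>k = 0..2 * n. c * \<Phi> k)"
    unfolding DFT_norm1_def using \<open>0 \<le> c\<close>
    by (intro sum_mono order_trans[OF coeff] mult_left_mono) auto
  then show "DFT_norm1 n u \<le> c * (\<Sum>k = 0..2 * n. \<Phi> k)"
    by (simp add: sum_distrib_left)
  show "DFT_norminf n u \<le> c"
    unfolding DFT_norminf_def using \<open>0 \<le> c\<close>
    by (subst Max_le_iff) (auto intro!: order_trans[OF coeff] mult_left_le)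
qed

theorem lemma1:
  fixes ws :: "complex list" and m n s :: nat and \<phi> \<rho>X :: "int \<Rightarrow> complex"
  assumes "s = length ws"
    and "int m \<ge> int s - 1"
    and "n = 9 * m"
    and "\<phi> \<in> Cp m"
    and "reproducing \<phi> ws"
    and "norm2sq \<phi> \<le> 2 * real s / (2 * real m + 1)"
    and "optimal_solution m n \<phi> \<rho>X"
  shows "max (DFT_norm1 n (varphiX \<phi> \<rho>X)) (18 * real s * DFT_norminf n (varphiX \<phi> \<rho>X))
           \<le> 36 * real s / sqrt (2 * real n + 1) * (Emn m n \<phi> + 1)"
proof -
  define E where "E = Emn m n \<phi>"
  define c where "c = (1 + 2 * E) / sqrt (2 * real n + 1)"
  define \<Phi> where "\<Phi> k = (cmod (ztrans \<phi> (root_unity (2 * n + 1) k)))\<^sup>2" for k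
  have feas: "feasible m n \<phi> \<rho>X" and "supT \<rho>X = E"
    using assms(7) by (simp_all add: optimal_solution_def E_def)
  then have "0 \<le> c"
    using supT_nonneg[of \<rho>X "5 * m"] by (simp add: c_def feasible_def)
  have coeff: "cmod (DFT n (varphiX \<phi> \<rho>X) k) \<le> c * min 1 (\<Phi> k)" if "k \<le> 2 * n" for k
    using norm_DFT_varphiX_le[OF assms(4) feas _ that] assms(3) \<open>supT \<rho>X = E\<close>
    by (simp add: \<Phi>_def c_def)
  have "(\<Sum>k = 0..2 * n. \<Phi> k) = (2 * real n + 1) * norm2sq \<phi>"
    using sum_norm_ztrans_root_unity_squared[OF assms(4), of "2 * n + 1"] assms(3)
    by (simp add: \<Phi>_def atLeast0AtMost lessThan_Suc_atMost[symmetric])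
  also have "\<dots> \<le> 9 * (2 * real m + 1) * (2 * real s / (2 * real m + 1))"
    using assms(3,6) norm2sq_nonneg by (intro mult_mono) auto
  also have "\<dots> = 18 * real s"
    by (simp add: field_simps)
  finally have "DFT_norm1 n (varphiX \<phi> \<rho>X) \<le> c * (18 * real s)"
    using DFT_norms_le(1)[OF coeff \<open>0 \<le> c\<close>] mult_left_mono[OF _ \<open>0 \<le> c\<close>] order_trans by blast
  moreover have "18 * real s * DFT_norminf n (varphiX \<phi> \<rho>X) \<le> c * (18 * real s)"
    using mult_left_mono[OF DFT_norms_le(2)[OF coeff \<open>0 \<le> c\<close>], of "18 * real s"] by (simp add: mult.commute)
  moreover have "c * (18 * real s) \<le> 36 * real s / sqrt (2 * real n + 1) * (E + 1)"
    by (simp add: c_def field_simps)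
  ultimately show ?thesis
    by (simp add: E_def)
qed

end
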